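(* Consider the admission control model described in the context, with discount rate $\alpha>0$, and suppose $0\le \Delta d_{i+1}\le \Delta d_i$ for $1\le i\le n-1$ and $\Delta d_1>0$. Then: (a) $w^S_i>0$ for all $i\in\{0,\dots,n-1\}$ and $S\in\mathcal F$; (b) for each fixed $i$, $w^S_i$ is nondecreasing in $S\in\mathcal F$ among sets containing $i$: if $S,T\in\mathcal F$ with $i\in S\subset T$, then $w^S_i\le w^T_i$.
   Context: Admission control model: a single-server queue whose number in system $L(t)\in\{0,1,\dots,n\}$ ($n\ge1$) evolves in continuous time; in state $i$ arrivals occur at rate $\lambda_i>0$ and services at rate $\mu_i>0$ ($1\le i\le n$), $\mu_0=0$. At each time the entry gate is shut ($a=1$, arrivals rejected) or open ($a=0$, arrivals admitted); in state $n$ it is always shut. Discount rate $\alpha>0$. For $S\subseteq\{0,\dots,n-1\}$, the $S$-active policy shuts the gate exactly in states $S\cup\{n\}$; $b^S_i=E_i[\int_0^\infty\lambda_{L(t)}a(t)e^{-\alpha t}dt]$ under it, starting from $i$. Marginal workloads: $w^S_i=\lambda_i[1-(b^S_{i+1}-b^S_i)]$, $0\le i\le n-1$. $\mathcal F=\{S_1,\dots,S_{n+1}\}$ with $S_k=\{k-1,\dots,n-1\}$ ($1\le k\le n$), $S_{n+1}=\emptyset$. Notation: $\Delta x_i=x_i-x_{i-1}$, $d_i=\mu_i-\lambda_i$ ($d_0=-\lambda_0$). *)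

theory Defs
  imports Main "HOL.Real"
begin

text \<open>Admission control birth-death model on states 0..n.
  lam i = arrival rate, mu i = service rate in state i, alpha = discount rate.\<close>

definition shut :: "nat \<Rightarrow> nat set \<Rightarrow> nat \<Rightarrow> bool" where
  "shut n S i \<longleftrightarrow> i \<in> S \<or> i = n"

text \<open>b^S_i: expected total discounted rejected-arrival rate under the S-active policy,
  characterised as the (unique) solution of its first-step (Bellman/Dynkin) linear equations
  for the continuous-time Markov chain:
  alpha b_i = lam_i a_i + lam_i (1 - a_i)(b_{i+1} - b_i) + mu_i (b_{i-1} - b_i).
  Outside {0..n} the function is fixed to 0 so that it is unique.\<close>
definition bS :: "nat \<Rightarrow> (nat \<Rightarrow> real) \<Rightarrow> (nat \<Rightarrow> real) \<Rightarrow> real \<Rightarrow> nat set \<Rightarrow> nat \<Rightarrow> real" where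
  "bS n lam mu alpha S = (THE b. (\<forall>i. n < i \<longrightarrow> b i = 0) \<and>
     (\<forall>i\<le>n. alpha * b i =
        (if shut n S i then lam i else lam i * (b (i + 1) - b i))
        + (if i = 0 then 0 else mu i * (b (i - 1) - b i))))"

definition wS :: "nat \<Rightarrow> (nat \<Rightarrow> real) \<Rightarrow> (nat \<Rightarrow> real) \<Rightarrow> real \<Rightarrow> nat set \<Rightarrow> nat \<Rightarrow> real" where
  "wS n lam mu alpha S i = lam i * (1 - (bS n lam mu alpha S (i + 1) - bS n lam mu alpha S i))"

definition Sk :: "nat \<Rightarrow> nat \<Rightarrow> nat set" where
  "Sk n k = (if k \<le> n then {k - 1 .. n - 1} else {})"

definition famF :: "nat \<Rightarrow> nat set set" where
  "famF n = Sk n ` {1 .. n + 1}"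

text \<open>d_i = mu_i - lam_i (with mu_0 = 0 this gives d_0 = - lam_0), and Delta d_i = d_i - d_{i-1}.\<close>
definition dd :: "(nat \<Rightarrow> real) \<Rightarrow> (nat \<Rightarrow> real) \<Rightarrow> nat \<Rightarrow> real" where
  "dd lam mu i = (if i = 0 then - lam 0 else mu i - lam i)"

definition Ddd :: "(nat \<Rightarrow> real) \<Rightarrow> (nat \<Rightarrow> real) \<Rightarrow> nat \<Rightarrow> real" where
  "Ddd lam mu i = dd lam mu i - dd lam mu (i - 1)"

end

theory Submission
  imports Defs
begin

text \<open>
  With z_i = 1 - (b_i - b_(i-1)) one has w_i = lam_i z_(i+1), and subtracting the value
  equations of neighbouring states turns them into a tridiagonal system for z_1, ..., z_n
  with right-hand side alpha + Delta d_k. The value equations have at most one solution by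
  the maximum principle, and a solution is produced by Gaussian elimination
  z_k = p_k + q_k z_(k+1), whose pivots are at least alpha + mu_(k+1) because mu_k q_k never
  exceeds the admitted arrival rate. Hence z > 0 as soon as alpha + Delta d_k > 0.
  Under the policy shutting the states j, ..., n - 1 one has q_k = 0, so z_k = p_k, for
  k >= j; shutting from an earlier state leaves the elimination below that state unchanged
  and lowers every later pivot to its minimum alpha + mu_(k+1), so p_k, and with it w_i for
  i >= j, can only grow.
\<close>

lemma birth_death_maximum_principle:
  fixes h A M :: "nat \<Rightarrow> real"
  assumes alpha: "0 < alpha"
    and A: "\<And>i. i \<le> n \<Longrightarrow> 0 \<le> A i" "A n = 0" and M: "\<And>i. i \<le> n \<Longrightarrow> 0 \<le> M i"
    and eq: "\<And>i. i \<le> n \<Longrightarrow>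
      alpha * h i = A i * (h (Suc i) - h i) + M i * (h (i - 1) - h i)"
    and "k \<le> n"
  shows "h k \<le> 0"
proof -
  obtain i where i: "i \<le> n" "\<And>k. k \<le> n \<Longrightarrow> h k \<le> h i"
    using Max_in[of "h ` {..n}"] Max_ge[of "h ` {..n}"] by fastforce
  have "A i * (h (Suc i) - h i) \<le> 0"
  proof (cases "i = n")
    case False
    then show ?thesis using i A(1) by (simp add: mult_nonneg_nonpos)
  qed (use A(2) in simp)
  moreover have "M i * (h (i - 1) - h i) \<le> 0"
    using i M by (simp add: mult_nonneg_nonpos)
  ultimately have "alpha * h i \<le> 0" using eq[OF i(1)] by linarith
  then have "h i \<le> 0" using alpha by (simp add: mult_le_0_iff)
  then show ?thesis using i(2)[OF \<open>k \<le> n\<close>] by linarith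
qed

lemma birth_death_homogeneous_eq_0:
  fixes h A M :: "nat \<Rightarrow> real"
  assumes "0 < alpha"
    and "\<And>i. i \<le> n \<Longrightarrow> 0 \<le> A i" "A n = 0" "\<And>i. i \<le> n \<Longrightarrow> 0 \<le> M i"
    and "\<And>i. i \<le> n \<Longrightarrow>
      alpha * h i = A i * (h (Suc i) - h i) + M i * (h (i - 1) - h i)"
    and "k \<le> n"
  shows "h k = 0"
proof -
  have "h k \<le> 0"
    by (rule birth_death_maximum_principle[where A = A and M = M]) (use assms in auto)
  moreover have "- h k \<le> 0"
    by (rule birth_death_maximum_principle[where A = A and M = M and h = "\<lambda>i. - h i"])
       (use assms in \<open>auto simp: algebra_simps\<close>)
  ultimately show ?thesis by simp
qed

definition z_of :: "(nat \<Rightarrow> real) \<Rightarrow> nat \<Rightarrow> real" where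
  "z_of b i = 1 - (b i - b (i - 1))"

locale admission_control =
  fixes n :: nat and lam mu :: "nat \<Rightarrow> real" and alpha :: real
  assumes alpha_pos: "0 < alpha"
    and lam_nonneg: "\<And>i. i \<le> n \<Longrightarrow> 0 \<le> lam i"
    and mu_nonneg: "\<And>i. i \<le> n \<Longrightarrow> 0 \<le> mu i"
    and mu_0: "mu 0 = 0"
begin

definition admitted :: "nat set \<Rightarrow> nat \<Rightarrow> real" where
  "admitted S i = (if shut n S i then 0 else lam i)"

lemma admitted_nonneg: "i \<le> n \<Longrightarrow> 0 \<le> admitted S i"
  by (simp add: admitted_def lam_nonneg)

lemma admitted_n [simp]: "admitted S n = 0"
  by (simp add: admitted_def shut_def)

lemma dd_eq: "dd lam mu i = mu i - lam i"
  by (simp add: dd_def mu_0)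

lemma value_equation_iff:
  "alpha * b i = (if shut n S i then lam i else lam i * (b (i + 1) - b i))
                 + (if i = 0 then 0 else mu i * (b (i - 1) - b i))
   \<longleftrightarrow>
   alpha * b i = mu i * z_of b i - dd lam mu i - admitted S i * z_of b (Suc i)"
  by (cases "i = 0") (auto simp: z_of_def admitted_def dd_eq mu_0 algebra_simps)

definition value_eqs :: "nat set \<Rightarrow> (nat \<Rightarrow> real) \<Rightarrow> bool" where
  "value_eqs S b \<longleftrightarrow> (\<forall>i. n < i \<longrightarrow> b i = 0) \<and>
     (\<forall>i\<le>n.
        alpha * b i = mu i * z_of b i - dd lam mu i - admitted S i * z_of b (Suc i))"

lemma bS_eq_The_value_eqs: "bS n lam mu alpha S = (THE b. value_eqs S b)"
  unfolding bS_def value_eqs_def value_equation_iff ..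

lemma value_eqs_unique:
  assumes "value_eqs S b" "value_eqs S b'"
  shows "b = b'"
proof
  fix k
  define h where "h i = b i - b' i" for i
  have eq: "alpha * h i = admitted S i * (h (Suc i) - h i) + mu i * (h (i - 1) - h i)"
    if "i \<le> n" for i
  proof -
    have "alpha * b i = mu i * z_of b i - dd lam mu i - admitted S i * z_of b (Suc i)"
      "alpha * b' i = mu i * z_of b' i - dd lam mu i - admitted S i * z_of b' (Suc i)"
      using assms that unfolding value_eqs_def by auto
    then show ?thesis unfolding h_def z_of_def by (simp add: algebra_simps)
  qed
  show "b k = b' k"
  proof (cases "k \<le> n")
    case True
    have "h k = 0"
      by (rule birth_death_homogeneous_eq_0[where A = "admitted S" and M = mu and n = n,
            OF alpha_pos])
        (use admitted_nonneg mu_nonneg eq True in auto)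
    then show ?thesis by (simp add: h_def)
  qed (use assms in \<open>simp add: value_eqs_def\<close>)
qed

text \<open>Row m + 1 of the system for z = z_of b: the value equation in state m + 1 minus
  the one in state m.\<close>

definition z_row :: "nat set \<Rightarrow> (nat \<Rightarrow> real) \<Rightarrow> nat \<Rightarrow> bool" where
  "z_row S z m \<longleftrightarrow> (alpha + mu (Suc m) + admitted S m) * z (Suc m)
     = alpha + Ddd lam mu (Suc m) + admitted S (Suc m) * z (Suc (Suc m)) + mu m * z m"

definition b_of :: "nat set \<Rightarrow> (nat \<Rightarrow> real) \<Rightarrow> nat \<Rightarrow> real" where
  "b_of S z i =
     (if n < i then 0 else (mu i * z i - dd lam mu i - admitted S i * z (Suc i)) / alpha)"

lemma z_of_b_of:
  assumes "z_row S z m" "m < n"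
  shows "z_of (b_of S z) (Suc m) = z (Suc m)"
proof -
  have "alpha * (b_of S z (Suc m) - b_of S z m)
        = mu (Suc m) * z (Suc m) - dd lam mu (Suc m) - admitted S (Suc m) * z (Suc (Suc m))
          - (mu m * z m - dd lam mu m - admitted S m * z (Suc m))"
    using assms(2) alpha_pos by (simp add: b_of_def field_simps)
  also have "\<dots> = alpha * (1 - z (Suc m))"
    using assms(1) unfolding z_row_def Ddd_def by (simp add: algebra_simps)
  finally show ?thesis using alpha_pos by (simp add: z_of_def)
qed

lemma value_eqs_b_of:
  assumes "\<And>m. m < n \<Longrightarrow> z_row S z m"
  shows "value_eqs S (b_of S z)"
  unfolding value_eqs_def
proof (intro conjI allI impI)
  fix i assume "i \<le> n"
  have "mu i * z_of (b_of S z) i = mu i * z i"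
  proof (cases i)
    case (Suc m)
    then show ?thesis using z_of_b_of assms \<open>i \<le> n\<close> by simp
  qed (simp add: mu_0)
  moreover have "admitted S i * z_of (b_of S z) (Suc i) = admitted S i * z (Suc i)"
    using z_of_b_of assms \<open>i \<le> n\<close> by (cases "i = n") auto
  moreover have "alpha * b_of S z i = mu i * z i - dd lam mu i - admitted S i * z (Suc i)"
    using \<open>i \<le> n\<close> alpha_pos by (simp add: b_of_def)
  ultimately show "alpha * b_of S z i
      = mu i * z_of (b_of S z) i - dd lam mu i - admitted S i * z_of (b_of S z) (Suc i)"
    by linarith
qed (simp add: b_of_def)

lemma bS_eq_b_of:
  assumes "\<And>m. m < n \<Longrightarrow> z_row S z m"
  shows "bS n lam mu alpha S = b_of S z"
  unfolding bS_eq_The_value_eqs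
proof (rule the_equality)
  show "value_eqs S (b_of S z)" using assms by (rule value_eqs_b_of)
  then show "b = b_of S z" if "value_eqs S b" for b
    using that by (rule value_eqs_unique[rotated])
qed

lemma wS_eq:
  assumes "\<And>m. m < n \<Longrightarrow> z_row S z m" "i < n"
  shows "wS n lam mu alpha S i = lam i * z (Suc i)"
  using z_of_b_of[OF assms(1)[OF assms(2)] assms(2)]
  by (simp add: wS_def bS_eq_b_of[OF assms(1)] z_of_def)

text \<open>Gaussian elimination: substituting z m = elim_offset S m + elim_slope S m * z (m + 1)
  into row m + 1 gives the same relation one index higher, with elim_pivot S m the resulting
  coefficient of z (m + 1).\<close>

primrec elim_slope :: "nat set \<Rightarrow> nat \<Rightarrow> real" where
  "elim_slope S 0 = 0"
| "elim_slope S (Suc m) =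
     admitted S (Suc m) / (alpha + mu (Suc m) + admitted S m - mu m * elim_slope S m)"

definition elim_pivot :: "nat set \<Rightarrow> nat \<Rightarrow> real" where
  "elim_pivot S m = alpha + mu (Suc m) + admitted S m - mu m * elim_slope S m"

lemma elim_slope_Suc: "elim_slope S (Suc m) = admitted S (Suc m) / elim_pivot S m"
  by (simp add: elim_pivot_def)

declare elim_slope.simps(2) [simp del]

primrec elim_offset :: "nat set \<Rightarrow> nat \<Rightarrow> real" where
  "elim_offset S 0 = 0"
| "elim_offset S (Suc m) =
     (alpha + Ddd lam mu (Suc m) + mu m * elim_offset S m) / elim_pivot S m"

function z_sol :: "nat set \<Rightarrow> nat \<Rightarrow> real" where
  "z_sol S k = (if n < k then 0 else elim_offset S k + elim_slope S k * z_sol S (Suc k))"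
  by auto
termination by (relation "measure (\<lambda>(S, k). Suc n - k)") auto

declare z_sol.simps [simp del]

lemma z_sol_eq:
  "k \<le> n \<Longrightarrow> z_sol S k = elim_offset S k + elim_slope S k * z_sol S (Suc k)"
  by (subst z_sol.simps) simp

lemma elim_slope_bounds:
  "m \<le> n \<Longrightarrow> 0 \<le> elim_slope S m \<and> mu m * elim_slope S m \<le> admitted S m"
proof (induction m)
  case 0
  then show ?case by (simp add: mu_0 admitted_nonneg)
next
  case (Suc m)
  have pivot_ge: "alpha + mu (Suc m) \<le> elim_pivot S m"
    using Suc by (simp add: elim_pivot_def)
  have "0 \<le> mu (Suc m)" "0 \<le> admitted S (Suc m)"
    using Suc.prems mu_nonneg admitted_nonneg by auto
  moreover from this
  have "mu (Suc m) * admitted S (Suc m) \<le> elim_pivot S m * admitted S (Suc m)"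
    using pivot_ge alpha_pos by (intro mult_right_mono) auto
  moreover have "0 < elim_pivot S m"
    using pivot_ge alpha_pos \<open>0 \<le> mu (Suc m)\<close> by linarith
  ultimately show ?case by (simp add: elim_slope_Suc field_simps)
qed

lemma elim_pivot_ge: "m < n \<Longrightarrow> alpha + mu (Suc m) \<le> elim_pivot S m"
  using elim_slope_bounds[of m S] by (simp add: elim_pivot_def)

lemma elim_pivot_pos: "m < n \<Longrightarrow> 0 < elim_pivot S m"
  using elim_pivot_ge[of m S] mu_nonneg[of "Suc m"] alpha_pos by simp

lemma z_sol_row:
  assumes "m < n"
  shows "z_row S (z_sol S) m"
proof -
  define P where "P = elim_pivot S m"
  have "P \<noteq> 0" using elim_pivot_pos[OF assms, of S] by (simp add: P_def)
  have "(alpha + mu (Suc m) + admitted S m) * z_sol S (Suc m)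
        = P * z_sol S (Suc m) + mu m * elim_slope S m * z_sol S (Suc m)"
    by (simp add: P_def elim_pivot_def algebra_simps)
  also have "\<dots> = P * elim_offset S (Suc m) + P * elim_slope S (Suc m) * z_sol S (Suc (Suc m))
                   + mu m * elim_slope S m * z_sol S (Suc m)"
    using z_sol_eq[of "Suc m" S] assms by (simp add: algebra_simps)
  also have "\<dots> = alpha + Ddd lam mu (Suc m) + mu m * elim_offset S m
                   + admitted S (Suc m) * z_sol S (Suc (Suc m))
                   + mu m * elim_slope S m * z_sol S (Suc m)"
    using \<open>P \<noteq> 0\<close> by (simp add: P_def elim_slope_Suc)
  also have "\<dots> = alpha + Ddd lam mu (Suc m) + admitted S (Suc m) * z_sol S (Suc (Suc m))
                   + mu m * z_sol S m"
    using z_sol_eq[of m S] assms by (simp add: algebra_simps)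
  finally show ?thesis unfolding z_row_def .
qed

lemma elim_slope_shut: "shut n S k \<Longrightarrow> elim_slope S k = 0"
  by (cases k) (simp_all add: elim_slope_Suc admitted_def)

lemma elim_agree_below:
  assumes "\<And>i. i < k \<Longrightarrow> admitted S i = admitted T i" "m \<le> k"
  shows "elim_offset S m = elim_offset T m \<and>
         (m < k \<longrightarrow> elim_slope S m = elim_slope T m)"
  using assms(2)
proof (induction m)
  case (Suc m)
  then have "elim_pivot S m = elim_pivot T m"
    using assms(1) by (simp add: elim_pivot_def)
  then show ?case using Suc assms(1) by (simp add: elim_slope_Suc)
qed simp

end

locale admission_control_pos = admission_control +
  assumes alpha_Ddd_pos: "\<And>k. 1 \<le> k \<Longrightarrow> k \<le> n \<Longrightarrow> 0 < alpha + Ddd lam mu k"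
begin

lemma elim_offset_pos: "m < n \<Longrightarrow> 0 < elim_offset S (Suc m)"
proof (induction m)
  case 0
  then show ?case using alpha_Ddd_pos[of 1] elim_pivot_pos[of 0 S] by simp
next
  case (Suc m)
  have "0 < elim_offset S (Suc m)"
    using Suc.prems by (intro Suc.IH) simp
  then have "0 \<le> mu (Suc m) * elim_offset S (Suc m)"
    using Suc.prems mu_nonneg[of "Suc m"] by (intro mult_nonneg_nonneg) auto
  then show ?case
    using Suc.prems alpha_Ddd_pos[of "Suc (Suc m)"] elim_pivot_pos[of "Suc m" S] by simp
qed

lemma elim_offset_nonneg: "m \<le> n \<Longrightarrow> 0 \<le> elim_offset S m"
  using elim_offset_pos by (cases m) (auto intro: less_imp_le)

lemma z_sol_nonneg: "0 \<le> z_sol S k"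
proof (induction k rule: z_sol.induct)
  case (1 S k)
  then show ?case
    using elim_offset_nonneg[of k S] elim_slope_bounds[of k S] by (subst z_sol.simps) simp
qed

lemma z_sol_pos: "m < n \<Longrightarrow> 0 < z_sol S (Suc m)"
  using z_sol_eq[of "Suc m" S] elim_offset_pos[of m S] elim_slope_bounds[of "Suc m" S]
    z_sol_nonneg[of S "Suc (Suc m)"]
  by (simp add: add_pos_nonneg)

lemma wS_pos: "i < n \<Longrightarrow> 0 < lam i \<Longrightarrow> 0 < wS n lam mu alpha S i"
  using wS_eq[OF z_sol_row] z_sol_pos by simp

lemma elim_offset_le:
  assumes agree: "\<And>i. i < k \<Longrightarrow> i \<in> S \<longleftrightarrow> i \<in> T"
    and shut_T: "{k..<n} \<subseteq> T"
    and "k \<le> m" "m \<le> n"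
  shows "elim_offset S m \<le> elim_offset T m"
  using assms(3,4)
proof (induction m rule: dec_induct)
  case base
  have "admitted S i = admitted T i" if "i < k" for i
    using agree[OF that] by (simp add: admitted_def shut_def)
  then show ?case using elim_agree_below[of k S T k] by simp
next
  case (step m)
  txt \<open>T admits nothing in state m, so its pivot is the least possible.\<close>
  have "m \<in> T" using step shut_T by auto
  then have "elim_slope T m = 0" "admitted T m = 0"
    by (simp_all add: elim_slope_shut admitted_def shut_def)
  then have pivot_T: "elim_pivot T m = alpha + mu (Suc m)"
    by (simp add: elim_pivot_def)
  have "0 < alpha + mu (Suc m)" using alpha_pos mu_nonneg[of "Suc m"] step by simp
  moreover have "0 \<le> alpha + Ddd lam mu (Suc m) + mu m * elim_offset S m"
    using alpha_Ddd_pos[of "Suc m"] mu_nonneg[of m] elim_offset_nonneg[of m S] step by simp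
  moreover have "mu m * elim_offset S m \<le> mu m * elim_offset T m"
    using step mu_nonneg[of m] by (simp add: mult_left_mono)
  ultimately have "(alpha + Ddd lam mu (Suc m) + mu m * elim_offset S m) / elim_pivot S m
      \<le> (alpha + Ddd lam mu (Suc m) + mu m * elim_offset T m) / (alpha + mu (Suc m))"
    using elim_pivot_ge[of m S] step by (intro frac_le) auto
  then show ?case using pivot_T by simp
qed

lemma wS_threshold_mono:
  assumes "j' \<le> j" "j \<le> i" "i < n"
  shows "wS n lam mu alpha {j..<n} i \<le> wS n lam mu alpha {j'..<n} i"
proof -
  have z_sol_threshold: "z_sol {l..<n} (Suc i) = elim_offset {l..<n} (Suc i)"
    if "l \<le> j" for l
  proof -
    have "shut n {l..<n} (Suc i)" using assms that by (auto simp: shut_def)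
    then show ?thesis using z_sol_eq[of "Suc i" "{l..<n}"] assms by (simp add: elim_slope_shut)
  qed
  have "wS n lam mu alpha {j..<n} i = lam i * elim_offset {j..<n} (Suc i)"
    using wS_eq[OF z_sol_row assms(3)] z_sol_threshold[of j] by simp
  also have "\<dots> \<le> lam i * elim_offset {j'..<n} (Suc i)"
    using assms lam_nonneg[of i] by (intro mult_left_mono elim_offset_le[where k = j']) auto
  also have "\<dots> = wS n lam mu alpha {j'..<n} i"
    using wS_eq[OF z_sol_row assms(3)] z_sol_threshold[of j'] assms(1) by simp
  finally show ?thesis .
qed

end

lemma famF_threshold:
  assumes "1 \<le> n" "S \<in> famF n"
  obtains j where "j \<le> n" "S = {j..<n}"
proof -
  obtain k where "1 \<le> k" "k \<le> n + 1" "S = Sk n k"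
    using assms(2) unfolding famF_def by auto
  then have "S = {k - 1..<n}"
    using assms(1) by (auto simp: Sk_def)
  then show thesis using \<open>k \<le> n + 1\<close> by (intro that) auto
qed

theorem proposition10:
  fixes n :: nat and lam mu :: "nat \<Rightarrow> real" and alpha :: real
  assumes n1: "1 \<le> n"
    and lam_pos: "\<forall>i\<le>n. 0 < lam i"
    and mu_pos: "\<forall>i. 1 \<le> i \<and> i \<le> n \<longrightarrow> 0 < mu i"
    and mu0: "mu 0 = 0"
    and alpha_pos: "0 < alpha"
    and conc: "\<forall>i. 1 \<le> i \<and> i \<le> n - 1 \<longrightarrow>
                 0 \<le> Ddd lam mu (i + 1) \<and> Ddd lam mu (i + 1) \<le> Ddd lam mu i"
    and D1: "0 < Ddd lam mu 1"
  shows "(\<forall>S\<in>famF n. \<forall>i\<le>n - 1. 0 < wS n lam mu alpha S i)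
       \<and> (\<forall>i S T. S \<in> famF n \<and> T \<in> famF n \<and> i \<in> S \<and> S \<subset> T
              \<longrightarrow> wS n lam mu alpha S i \<le> wS n lam mu alpha T i)"
proof -
  have "0 < alpha + Ddd lam mu k" if "1 \<le> k" "k \<le> n" for k
  proof (cases "k = 1")
    case False
    with that have "1 \<le> k - 1 \<and> k - 1 \<le> n - 1" by linarith
    then have "0 \<le> Ddd lam mu k" using conc \<open>k \<noteq> 1\<close> by fastforce
    then show ?thesis using alpha_pos by simp
  qed (use alpha_pos D1 in simp)
  moreover have "0 \<le> mu i" if "i \<le> n" for i
    using that mu_pos mu0 by (cases i) auto
  ultimately interpret admission_control_pos n lam mu alpha
    using alpha_pos lam_pos mu0 by unfold_locales auto
  show ?thesis
  proof (intro conjI ballI allI impI)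
    fix S i assume "i \<le> n - 1"
    then show "0 < wS n lam mu alpha S i" using n1 lam_pos by (intro wS_pos) auto
  next
    fix i S T assume ST: "S \<in> famF n \<and> T \<in> famF n \<and> i \<in> S \<and> S \<subset> T"
    then obtain j j' where S: "S = {j..<n}" and T: "T = {j'..<n}"
      using famF_threshold[OF n1] by metis
    have "j' \<le> j" "j \<le> i" "i < n"
      using ST unfolding S T by auto
    then show "wS n lam mu alpha S i \<le> wS n lam mu alpha T i"
      unfolding S T by (rule wS_threshold_mono)
  qed
qed

end
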